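(* Let $F\subset\mathbb R^d$ be a bounded set with Minkowski dimension $s$ whose Minkowski content $\mathcal M(F)=\lim_{\varepsilon\searrow0}\varepsilon^{s-d}\mathrm{vol}_d(F_\varepsilon)\in(0,\infty)$ exists. Let $\varepsilon_1>\varepsilon_2>\dots>0$, $x_j=-\log\varepsilon_j$, and suppose $y_{j}=\log\mathcal M(F)+s\,x_j+\delta_j$, $j\in\mathbb N$, where the $\delta_j$ have mean zero, finite positive variance, and covariance matrices $Q_n$ of $(\delta_1,\dots,\delta_n)$ satisfying $0<\inf_n\nu_{\min}(Q_n)\le\sup_n\nu_{\max}(Q_n)<\infty$. Suppose $\widetilde S_n^2=\Theta(n^\gamma)$ and $\bar x_n=O(n^{\mu/2})$ for constants $\gamma,\mu\ge0$ with $\alpha:=1-\max\{\gamma,\mu\}-2\max\{0,\mu-\gamma\}>0$. Let $(\hat\beta^{(n)},\hat s^{(n)})$ minimize $\sum_{j=1}^n(y_j-\beta-sx_j)^2$ and $\hat{\mathcal M}^{(n)}=\exp(\hat\beta^{(n)})$. Then for every $\varepsilon>0$, $P(|\hat s^{(n)}-s|>\varepsilon)=O(n^{-\alpha})$ and $P(|\hat{\mathcal M}^{(n)}-\mathcal M(F)|>\varepsilon)=O(n^{-\alpha})$ as $n\to\infty$.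
   Context: $F_\varepsilon=\{x:\operatorname{dist}(x,F)\le\varepsilon\}$; the observations are intended as $y_j=\log(\varepsilon_j^{-d}\mathrm{vol}_d(F_{\varepsilon_j}))$. $\bar x_n=\frac1n\sum_{i\le n}x_i$, $\widetilde S_n^2=\frac1n\sum_{i\le n}(x_i-\bar x_n)^2$; $\nu_{\min},\nu_{\max}$ are extreme eigenvalues; $\Theta$ means bounded above and below by positive constant multiples eventually. *)

theory Defs
  imports "HOL-Probability.Probability" "HOL-Library.Landau_Symbols"
    "Jordan_Normal_Form.Char_Poly"
begin

definition nbhd :: "'a::euclidean_space set \<Rightarrow> real \<Rightarrow> 'a set" where
  "nbhd F e = {x. infdist x F \<le> e}"

definition vol :: "'a::euclidean_space set \<Rightarrow> real" where
  "vol A = measure lebesgue A"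

definition minkowski_dim :: "'a::euclidean_space set \<Rightarrow> real \<Rightarrow> bool" where
  "minkowski_dim F s \<longleftrightarrow>
     ((\<lambda>e. ln (vol (nbhd F e)) / ln e) \<longlongrightarrow> real DIM('a) - s) (at_right 0)"

definition has_minkowski_content :: "'a::euclidean_space set \<Rightarrow> real \<Rightarrow> real \<Rightarrow> bool" where
  "has_minkowski_content F s c \<longleftrightarrow>
     ((\<lambda>e. e powr (s - real DIM('a)) * vol (nbhd F e)) \<longlongrightarrow> c) (at_right 0)"

definition eig_min :: "real Matrix.mat \<Rightarrow> real" where
  "eig_min A = Min {k. eigenvalue A k}"
definition eig_max :: "real Matrix.mat \<Rightarrow> real" where
  "eig_max A = Max {k. eigenvalue A k}"

definition xbar :: "(nat \<Rightarrow> real) \<Rightarrow> nat \<Rightarrow> real" where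
  "xbar x n = (\<Sum>i=1..n. x i) / real n"
definition Stilde2 :: "(nat \<Rightarrow> real) \<Rightarrow> nat \<Rightarrow> real" where
  "Stilde2 x n = (\<Sum>i=1..n. (x i - xbar x n)\<^sup>2) / real n"

definition RSS :: "(nat \<Rightarrow> real) \<Rightarrow> (nat \<Rightarrow> real) \<Rightarrow> nat \<Rightarrow> real \<Rightarrow> real \<Rightarrow> real" where
  "RSS x y n b t = (\<Sum>j=1..n. (y j - b - t * x j)\<^sup>2)"

end

theory Submission
  imports Defs "Jordan_Normal_Form.Spectral_Radius"
begin

text \<open>
  The least-squares estimates solve the normal equations, so the errors \<open>shat n - s\<close> and
  \<open>bhat n - ln MF\<close> are linear combinations \<open>\<Sum>j. w j * \<delta> j\<close> of the noise with deterministic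
  weights. The second moment of such a combination is the quadratic form of the covariance
  matrix at \<open>w\<close>, which is at most \<open>eig_max (Q n) * (\<Sum>j. (w j)\<^sup>2)\<close> because the maximum of the
  Rayleigh quotient is an eigenvalue. Chebyshev's inequality then bounds the tail probabilities
  by a constant times \<open>\<Sum>j. (w j)\<^sup>2\<close>, which equals \<open>1 / (n * Stilde2 x n)\<close> for the slope and
  \<open>1 / n + (xbar x n)\<^sup>2 / (n * Stilde2 x n)\<close> for the intercept; the growth hypotheses make
  both \<open>O(n powr - \<alpha>)\<close>. Finally, \<open>\<bar>exp b - MF\<bar> > e\<close> forces \<open>\<bar>b - ln MF\<bar> > ln (1 + e / MF)\<close>.
\<close>

section \<open>Quadratic forms and the Rayleigh quotient\<close>

lemma nonpos_if_linear_le_quadratic: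
  fixes c q :: real
  assumes "\<And>t. t > 0 \<Longrightarrow> t * c \<le> t\<^sup>2 * q"
  shows "c \<le> 0"
proof (rule ccontr)
  assume "\<not> c \<le> 0"
  define t where "t = c / (\<bar>q\<bar> + 1)"
  have t: "t > 0" using \<open>\<not> c \<le> 0\<close> by (simp add: t_def add_pos_nonneg)
  have "t * c \<le> t * (t * \<bar>q\<bar>)"
  proof -
    have "t\<^sup>2 * q \<le> t\<^sup>2 * \<bar>q\<bar>" by (rule mult_left_mono) auto
    then show ?thesis using assms[OF t] by (simp add: power2_eq_square mult.assoc)
  qed
  then have "c \<le> t * \<bar>q\<bar>" using t by simp
  moreover have "t * \<bar>q\<bar> < c" using \<open>\<not> c \<le> 0\<close> by (simp add: t_def field_simps)
  ultimately show False by simp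
qed

lemma linear_coeff_eq_0_if_minimum:
  fixes c q :: real
  assumes "\<And>h. 0 \<le> h * c + h\<^sup>2 * q"
  shows "c = 0"
proof -
  have "c \<le> 0"
  proof (rule nonpos_if_linear_le_quadratic)
    show "t * c \<le> t\<^sup>2 * q" for t using assms[of "- t"] by simp
  qed
  moreover have "- c \<le> 0"
  proof (rule nonpos_if_linear_le_quadratic)
    show "t * - c \<le> t\<^sup>2 * q" for t using assms[of t] by simp
  qed
  ultimately show ?thesis by simp
qed

definition quad_form :: "real mat \<Rightarrow> nat \<Rightarrow> (nat \<Rightarrow> real) \<Rightarrow> real" where
  "quad_form A n u = (\<Sum>i<n. \<Sum>k<n. A $$ (i, k) * u i * u k)"

lemma continuous_on_coordinate [continuous_intros]:
  "continuous_on S (\<lambda>x :: nat \<Rightarrow> real. x i)"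
  by (rule continuous_on_subset[OF continuous_on_product_coordinates]) auto

lemma continuous_on_quad_form: "continuous_on S (quad_form A n)"
  unfolding quad_form_def by (intro continuous_intros)

lemma quad_form_scale: "quad_form A n (\<lambda>i. c * u i) = c\<^sup>2 * quad_form A n u"
  unfolding quad_form_def power2_eq_square by (simp add: sum_distrib_left algebra_simps)

lemma quad_form_restrict: "quad_form A n (\<lambda>i. if i < n then u i else 0) = quad_form A n u"
  unfolding quad_form_def by (intro sum.cong refl) auto

lemma quad_form_eq_0_if_sum_sq_eq_0:
  assumes "(\<Sum>i<n. (u i)\<^sup>2) = 0"
  shows "quad_form A n u = 0"
proof -
  have "\<forall>i\<in>{..<n}. (u i)\<^sup>2 = 0" using assms by (subst sum_nonneg_eq_0_iff[symmetric]) auto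
  then show ?thesis unfolding quad_form_def by auto
qed

lemma compact_unit_sphere_prefix:
  "compact {v :: nat \<Rightarrow> real. (\<forall>i. v i \<in> (if i < n then {-1..1} else {0})) \<and> (\<Sum>i<n. (v i)\<^sup>2) = 1}"
proof -
  let ?K = "\<lambda>i::nat. if i < n then {-1..1::real} else {0}"
  have "compactin (product_topology (\<lambda>_. euclidean) UNIV) (PiE UNIV ?K)"
    by (subst compactin_PiE) auto
  then have "compact (PiE UNIV ?K)"
    by (simp add: euclidean_product_topology)
  moreover have "closed {v :: nat \<Rightarrow> real. (\<Sum>i<n. (v i)\<^sup>2) = 1}"
    by (intro closed_Collect_eq continuous_intros)
  moreover have "{v. (\<forall>i. v i \<in> ?K i) \<and> (\<Sum>i<n. (v i)\<^sup>2) = 1}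
      = PiE UNIV ?K \<inter> {v. (\<Sum>i<n. (v i)\<^sup>2) = 1}"
    by (auto simp: PiE_def Pi_def)
  ultimately show ?thesis by (simp add: compact_Int_closed)
qed

lemma quad_form_max_on_unit_sphere:
  assumes "n \<ge> 1"
  obtains v where "(\<Sum>i<n. (v i)\<^sup>2) = 1"
    and "\<And>u. quad_form A n u \<le> quad_form A n v * (\<Sum>i<n. (u i)\<^sup>2)"
proof -
  define S where
    "S = {v :: nat \<Rightarrow> real. (\<forall>i. v i \<in> (if i < n then {-1..1} else {0})) \<and> (\<Sum>i<n. (v i)\<^sup>2) = 1}"
  have "(\<lambda>i. if i = 0 then 1 else 0 :: real) \<in> S"
    using assms by (simp add: S_def if_distrib[of "\<lambda>x. x\<^sup>2"] sum.If_cases lessThan_def)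
  then have "S \<noteq> {}" by blast
  then obtain v where "v \<in> S" and vmax: "\<And>u. u \<in> S \<Longrightarrow> quad_form A n u \<le> quad_form A n v"
    using continuous_attains_sup[of S "quad_form A n"] compact_unit_sphere_prefix continuous_on_quad_form
    unfolding S_def by blast
  have "quad_form A n u \<le> quad_form A n v * (\<Sum>i<n. (u i)\<^sup>2)" for u
  proof (cases "(\<Sum>i<n. (u i)\<^sup>2) = 0")
    case True
    then show ?thesis by (simp add: quad_form_eq_0_if_sum_sq_eq_0)
  next
    case False
    define N where "N = (\<Sum>i<n. (u i)\<^sup>2)"
    have "N > 0" using False unfolding N_def by (simp add: order_neq_le_trans sum_nonneg)
    define w where "w = (\<lambda>i. if i < n then u i / sqrt N else 0)"
    have w_norm: "(\<Sum>i<n. (w i)\<^sup>2) = 1"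
      using \<open>N > 0\<close> by (simp add: w_def power_divide N_def[symmetric] flip: sum_divide_distrib)
    have "w i \<in> {-1..1}" if "i < n" for i
    proof -
      have "(w i)\<^sup>2 \<le> (\<Sum>i<n. (w i)\<^sup>2)" by (rule member_le_sum) (use that in auto)
      then show ?thesis using w_norm by (simp add: abs_square_le_1 abs_le_iff)
    qed
    moreover have "w i = 0" if "\<not> i < n" for i using that by (simp add: w_def)
    ultimately have "w \<in> S" using w_norm unfolding S_def by auto
    moreover have "quad_form A n w = quad_form A n u / N"
      using quad_form_restrict[of A n "\<lambda>i. u i / sqrt N"] quad_form_scale[of A n "1 / sqrt N" u]
        \<open>N > 0\<close> by (simp add: w_def power_divide)
    ultimately have "quad_form A n u / N \<le> quad_form A n v" using vmax by metis
    then show ?thesis using \<open>N > 0\<close> by (simp add: N_def divide_le_eq mult.commute)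
  qed
  moreover have "(\<Sum>i<n. (v i)\<^sup>2) = 1" using \<open>v \<in> S\<close> by (simp add: S_def)
  ultimately show thesis using that by blast
qed

lemma quad_form_perturb:
  assumes sym: "\<And>i k. i < n \<Longrightarrow> k < n \<Longrightarrow> A $$ (i, k) = A $$ (k, i)"
  shows "quad_form A n (\<lambda>i. v i + t * r i) = quad_form A n v
    + 2 * t * (\<Sum>i<n. r i * (\<Sum>k<n. A $$ (i, k) * v k)) + t\<^sup>2 * quad_form A n r"
proof -
  have expand: "A $$ (i, k) * (v i + t * r i) * (v k + t * r k) = A $$ (i, k) * v i * v k
      + t * (A $$ (i, k) * v i * r k) + t * (A $$ (i, k) * r i * v k) + t\<^sup>2 * (A $$ (i, k) * r i * r k)"
    for i k by (simp add: algebra_simps power2_eq_square)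
  have "(\<Sum>i<n. \<Sum>k<n. A $$ (i, k) * v i * r k) = (\<Sum>i<n. \<Sum>k<n. A $$ (i, k) * r i * v k)"
    by (subst sum.swap) (auto intro!: sum.cong simp: sym)
  moreover have "(\<Sum>i<n. \<Sum>k<n. A $$ (i, k) * r i * v k) = (\<Sum>i<n. r i * (\<Sum>k<n. A $$ (i, k) * v k))"
    by (simp add: sum_distrib_left algebra_simps)
  moreover have "quad_form A n (\<lambda>i. v i + t * r i) = quad_form A n v
      + t * (\<Sum>i<n. \<Sum>k<n. A $$ (i, k) * v i * r k)
      + t * (\<Sum>i<n. \<Sum>k<n. A $$ (i, k) * r i * v k) + t\<^sup>2 * quad_form A n r"
    unfolding quad_form_def expand by (simp only: sum.distrib sum_distrib_left)
  ultimately show ?thesis by simp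
qed

lemma rayleigh_maximizer_eigen_equation:
  assumes sym: "\<And>i k. i < n \<Longrightarrow> k < n \<Longrightarrow> A $$ (i, k) = A $$ (k, i)"
    and v_norm: "(\<Sum>i<n. (v i)\<^sup>2) = 1"
    and v_max: "\<And>u. quad_form A n u \<le> quad_form A n v * (\<Sum>i<n. (u i)\<^sup>2)"
    and "i < n"
  shows "(\<Sum>k<n. A $$ (i, k) * v k) = quad_form A n v * v i"
proof -
  define l where "l = quad_form A n v"
  define Av where "Av = (\<lambda>i. \<Sum>k<n. A $$ (i, k) * v k)"
  define r where "r = (\<lambda>i. Av i - l * v i)"
  define Y where "Y = (\<Sum>i<n. v i * r i)"
  define Z where "Z = (\<Sum>i<n. (r i)\<^sup>2)"
  have norm_perturb: "(\<Sum>i<n. (v i + t * r i)\<^sup>2) = 1 + 2 * t * Y + t\<^sup>2 * Z" for t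
  proof -
    have "(\<Sum>i<n. (v i + t * r i)\<^sup>2) = (\<Sum>i<n. (v i)\<^sup>2 + 2 * t * (v i * r i) + t\<^sup>2 * (r i)\<^sup>2)"
      by (intro sum.cong refl) (simp add: power2_eq_square algebra_simps)
    then show ?thesis using v_norm unfolding Y_def Z_def by (simp only: sum.distrib sum_distrib_left)
  qed
  have "(\<Sum>i<n. r i * Av i) = Z + l * Y"
  proof -
    have "(\<Sum>i<n. r i * Av i) = (\<Sum>i<n. (r i)\<^sup>2 + l * (v i * r i))"
      by (intro sum.cong refl) (simp add: r_def power2_eq_square algebra_simps)
    then show ?thesis unfolding Y_def Z_def by (simp add: sum.distrib sum_distrib_left)
  qed
  \<comment> \<open>first-order condition for the maximum of the Rayleigh quotient in the direction \<open>r\<close>\<close>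
  have "2 * Z \<le> 0"
  proof (rule nonpos_if_linear_le_quadratic)
    fix t :: real
    have "quad_form A n (\<lambda>i. v i + t * r i) = l + 2 * t * (Z + l * Y) + t\<^sup>2 * quad_form A n r"
      using quad_form_perturb[OF sym, where v = v and t = t and r = r] \<open>(\<Sum>i<n. r i * Av i) = Z + l * Y\<close>
      unfolding Av_def l_def by simp
    moreover have "quad_form A n (\<lambda>i. v i + t * r i) \<le> l * (\<Sum>i<n. (v i + t * r i)\<^sup>2)"
      using v_max unfolding l_def by blast
    ultimately show "t * (2 * Z) \<le> t\<^sup>2 * (l * Z - quad_form A n r)"
      unfolding norm_perturb by (simp add: algebra_simps)
  qed
  then have "Z = 0" using sum_nonneg[of "{..<n}" "\<lambda>i. (r i)\<^sup>2"] unfolding Z_def by simp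
  then have "r i = 0"
    using \<open>i < n\<close> unfolding Z_def by (subst (asm) sum_nonneg_eq_0_iff) auto
  then show ?thesis unfolding r_def Av_def l_def by simp
qed

lemma eigenvalue_if_eigen_equations:
  fixes A :: "'a :: comm_ring_1 mat"
  assumes A: "A \<in> carrier_mat n n"
    and eq: "\<And>i. i < n \<Longrightarrow> (\<Sum>k<n. A $$ (i, k) * v k) = l * v i"
    and "i < n" "v i \<noteq> 0"
  shows "eigenvalue A l"
  unfolding eigenvalue_def eigenvector_def
proof (intro exI conjI)
  show "vec n v \<in> carrier_vec (dim_row A)" using A by simp
  show "vec n v \<noteq> 0\<^sub>v (dim_row A)"
  proof
    assume "vec n v = 0\<^sub>v (dim_row A)"
    then have "vec n v $ i = 0\<^sub>v n $ i" using A by simp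
    then show False using \<open>i < n\<close> \<open>v i \<noteq> 0\<close> by simp
  qed
  show "A *\<^sub>v vec n v = l \<cdot>\<^sub>v vec n v"
  proof (rule eq_vecI)
    fix j assume "j < dim_vec (l \<cdot>\<^sub>v vec n v)"
    then have "j < n" by simp
    have "(A *\<^sub>v vec n v) $ j = (\<Sum>k\<in>{0..<n}. A $$ (j, k) * v k)"
      using A \<open>j < n\<close> by (auto simp: scalar_prod_def intro: sum.cong)
    also have "\<dots> = (l \<cdot>\<^sub>v vec n v) $ j" using eq[OF \<open>j < n\<close>] \<open>j < n\<close> by (simp add: atLeast0LessThan)
    finally show "(A *\<^sub>v vec n v) $ j = (l \<cdot>\<^sub>v vec n v) $ j" .
  qed (use A in simp)
qed

lemma quad_form_le_eig_max:
  assumes A: "A \<in> carrier_mat n n" and "n \<ge> 1"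
    and sym: "\<And>i k. i < n \<Longrightarrow> k < n \<Longrightarrow> A $$ (i, k) = A $$ (k, i)"
  shows "quad_form A n u \<le> eig_max A * (\<Sum>i<n. (u i)\<^sup>2)"
proof -
  obtain v where v_norm: "(\<Sum>i<n. (v i)\<^sup>2) = 1"
    and v_max: "\<And>u. quad_form A n u \<le> quad_form A n v * (\<Sum>i<n. (u i)\<^sup>2)"
    using quad_form_max_on_unit_sphere[OF \<open>n \<ge> 1\<close>] by blast
  have "\<exists>i<n. v i \<noteq> 0"
  proof (rule ccontr)
    assume "\<not> (\<exists>i<n. v i \<noteq> 0)"
    then have "(\<Sum>i<n. (v i)\<^sup>2) = 0" by simp
    then show False using v_norm by simp
  qed
  then obtain i where "i < n" "v i \<noteq> 0" by blast
  have "eigenvalue A (quad_form A n v)"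
    using eigenvalue_if_eigen_equations[OF A rayleigh_maximizer_eigen_equation[OF sym v_norm v_max] \<open>i < n\<close> \<open>v i \<noteq> 0\<close>] .
  then have "quad_form A n v \<le> eig_max A"
    using card_finite_spectrum(1)[OF A] unfolding eig_max_def spectrum_def by simp
  then have "quad_form A n v * (\<Sum>i<n. (u i)\<^sup>2) \<le> eig_max A * (\<Sum>i<n. (u i)\<^sup>2)"
    by (rule mult_right_mono) (simp add: sum_nonneg)
  then show ?thesis using v_max[of u] by linarith
qed

section \<open>Second moments of linear combinations of the noise\<close>

definition cov_mat :: "'a measure \<Rightarrow> (nat \<Rightarrow> 'a \<Rightarrow> real) \<Rightarrow> nat \<Rightarrow> real mat" where
  "cov_mat M \<delta> n = Matrix.mat n n (\<lambda>(i, k).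
     prob_space.expectation M (\<lambda>\<omega>. (\<delta> (Suc i) \<omega> - prob_space.expectation M (\<delta> (Suc i)))
                                 * (\<delta> (Suc k) \<omega> - prob_space.expectation M (\<delta> (Suc k)))))"

locale centered_noise = prob_space M for M :: "'a measure" +
  fixes \<delta> :: "nat \<Rightarrow> 'a \<Rightarrow> real"
  assumes noise_measurable: "\<And>j. j \<ge> 1 \<Longrightarrow> \<delta> j \<in> borel_measurable M"
    and noise_square_integrable: "\<And>j. j \<ge> 1 \<Longrightarrow> integrable M (\<lambda>\<omega>. (\<delta> j \<omega>)\<^sup>2)"
    and noise_centered: "\<And>j. j \<ge> 1 \<Longrightarrow> integrable M (\<delta> j) \<and> expectation (\<delta> j) = 0"
begin

lemma cov_mat_entry:
  assumes "i < n" "k < n"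
  shows "cov_mat M \<delta> n $$ (i, k) = expectation (\<lambda>\<omega>. \<delta> (Suc i) \<omega> * \<delta> (Suc k) \<omega>)"
  using assms noise_centered by (simp add: cov_mat_def)

lemma integrable_noise_mult:
  assumes "i \<ge> 1" "j \<ge> 1"
  shows "integrable M (\<lambda>\<omega>. \<delta> i \<omega> * \<delta> j \<omega>)"
proof (rule Bochner_Integration.integrable_bound[of _ "\<lambda>\<omega>. (\<delta> i \<omega>)\<^sup>2 + (\<delta> j \<omega>)\<^sup>2"])
  show "integrable M (\<lambda>\<omega>. (\<delta> i \<omega>)\<^sup>2 + (\<delta> j \<omega>)\<^sup>2)"
    using noise_square_integrable assms by auto
  show "(\<lambda>\<omega>. \<delta> i \<omega> * \<delta> j \<omega>) \<in> borel_measurable M"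
    using noise_measurable assms by auto
  have "\<bar>a * b\<bar> \<le> a\<^sup>2 + b\<^sup>2" for a b :: real
  proof -
    have "2 * (\<bar>a\<bar> * \<bar>b\<bar>) \<le> a\<^sup>2 + b\<^sup>2"
      using sum_squares_bound[of "\<bar>a\<bar>" "\<bar>b\<bar>"] by (simp add: mult.assoc)
    then show ?thesis unfolding abs_mult using zero_le_mult_iff[of "\<bar>a\<bar>" "\<bar>b\<bar>"] by linarith
  qed
  then show "AE \<omega> in M. norm (\<delta> i \<omega> * \<delta> j \<omega>) \<le> norm ((\<delta> i \<omega>)\<^sup>2 + (\<delta> j \<omega>)\<^sup>2)"
    by (intro AE_I2) simp
qed

lemma second_moment_linear_comb:
  assumes "n \<ge> 1" and C: "eig_max (cov_mat M \<delta> n) \<le> C"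
  shows "integrable M (\<lambda>\<omega>. (\<Sum>j=1..n. c j * \<delta> j \<omega>)\<^sup>2)"
    and "expectation (\<lambda>\<omega>. (\<Sum>j=1..n. c j * \<delta> j \<omega>)\<^sup>2) \<le> C * (\<Sum>j=1..n. (c j)\<^sup>2)"
proof -
  have expand: "(\<Sum>j=1..n. c j * \<delta> j \<omega>)\<^sup>2 = (\<Sum>j=1..n. \<Sum>l=1..n. c j * c l * (\<delta> j \<omega> * \<delta> l \<omega>))" for \<omega>
    unfolding power2_eq_square sum_product by (intro sum.cong refl) (simp add: algebra_simps)
  have int_term: "integrable M (\<lambda>\<omega>. c j * c l * (\<delta> j \<omega> * \<delta> l \<omega>))" if "j \<in> {1..n}" "l \<in> {1..n}" for j l
    using integrable_noise_mult[of j l] that by auto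
  show "integrable M (\<lambda>\<omega>. (\<Sum>j=1..n. c j * \<delta> j \<omega>)\<^sup>2)"
    unfolding expand using int_term by (intro Bochner_Integration.integrable_sum) auto
  have "expectation (\<lambda>\<omega>. (\<Sum>j=1..n. c j * \<delta> j \<omega>)\<^sup>2)
      = (\<Sum>j=1..n. \<Sum>l=1..n. c j * c l * expectation (\<lambda>\<omega>. \<delta> j \<omega> * \<delta> l \<omega>))"
    unfolding expand using int_term
    by (subst Bochner_Integration.integral_sum, force intro!: Bochner_Integration.integrable_sum)
       (intro sum.cong refl, subst Bochner_Integration.integral_sum, auto)
  also have "\<dots> = quad_form (cov_mat M \<delta> n) n (\<lambda>i. c (Suc i))"
    unfolding quad_form_def One_nat_def sum.atLeast1_atMost_eq
    by (intro sum.cong refl) (auto simp: cov_mat_entry algebra_simps)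
  also have "\<dots> \<le> eig_max (cov_mat M \<delta> n) * (\<Sum>i<n. (c (Suc i))\<^sup>2)"
    by (rule quad_form_le_eig_max[OF _ \<open>n \<ge> 1\<close>]) (auto simp: cov_mat_def mult.commute)
  also have "\<dots> \<le> C * (\<Sum>j=1..n. (c j)\<^sup>2)"
    unfolding One_nat_def sum.atLeast1_atMost_eq by (rule mult_right_mono[OF C]) (simp add: sum_nonneg)
  finally show "expectation (\<lambda>\<omega>. (\<Sum>j=1..n. c j * \<delta> j \<omega>)\<^sup>2) \<le> C * (\<Sum>j=1..n. (c j)\<^sup>2)" .
qed

lemma tail_linear_comb_le:
  assumes "n \<ge> 1" and C: "eig_max (cov_mat M \<delta> n) \<le> C" and "e > 0"
  shows "prob {\<omega> \<in> space M. e < \<bar>\<Sum>j=1..n. c j * \<delta> j \<omega>\<bar>} \<le> C * (\<Sum>j=1..n. (c j)\<^sup>2) / e\<^sup>2"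
proof -
  define Z where "Z = (\<lambda>\<omega>. \<Sum>j=1..n. c j * \<delta> j \<omega>)"
  have [measurable]: "Z \<in> borel_measurable M"
    unfolding Z_def using noise_measurable by (intro borel_measurable_sum) auto
  note moment = second_moment_linear_comb[OF \<open>n \<ge> 1\<close> C, of c]
  have "prob {\<omega> \<in> space M. e < \<bar>Z \<omega>\<bar>} \<le> prob {\<omega> \<in> space M. e\<^sup>2 \<le> (Z \<omega>)\<^sup>2}"
    using \<open>e > 0\<close> by (intro finite_measure_mono) (auto simp flip: abs_le_square_iff)
  also have "\<dots> \<le> expectation (\<lambda>\<omega>. (Z \<omega>)\<^sup>2) / e\<^sup>2"
    using moment(1) \<open>e > 0\<close>
    by (intro integral_Markov_inequality_measure[of M _ "space M"]) (auto simp: Z_def)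
  also have "\<dots> \<le> C * (\<Sum>j=1..n. (c j)\<^sup>2) / e\<^sup>2"
    using moment(2) by (simp add: Z_def divide_right_mono)
  finally show ?thesis unfolding Z_def .
qed

end

section \<open>Ordinary least squares\<close>

lemma sum_eq_real_mult_xbar: "(\<Sum>j=1..n. x j) = real n * xbar x n"
  by (cases "n = 0") (simp_all add: xbar_def)

lemma sum_dev_xbar_eq_0: "(\<Sum>j=1..n. x j - xbar x n) = 0"
  using sum_eq_real_mult_xbar[of x n] by (simp add: sum_subtractf)

lemma real_mult_Stilde2: "real n * Stilde2 x n = (\<Sum>j=1..n. (x j - xbar x n)\<^sup>2)"
  by (cases "n = 0") (simp_all add: Stilde2_def)

lemma sum_dev_xbar_mult_self: "(\<Sum>j=1..n. (x j - xbar x n) * x j) = real n * Stilde2 x n"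
proof -
  have "(\<Sum>j=1..n. (x j - xbar x n) * x j)
      = (\<Sum>j=1..n. (x j - xbar x n)\<^sup>2) + xbar x n * (\<Sum>j=1..n. x j - xbar x n)"
    by (simp add: sum_distrib_left power2_eq_square algebra_simps flip: sum.distrib)
  then show ?thesis using sum_dev_xbar_eq_0[of x n] real_mult_Stilde2[of n x] by simp
qed

lemma ols_normal_equations:
  assumes min: "\<And>b t. RSS x y n bh th \<le> RSS x y n b t"
  shows "(\<Sum>j=1..n. y j - bh - th * x j) = 0"
    and "(\<Sum>j=1..n. (y j - bh - th * x j) * x j) = 0"
proof -
  define res where "res = (\<lambda>j. y j - bh - th * x j)"
  have "- 2 * (\<Sum>j=1..n. res j) = 0"
  proof (rule linear_coeff_eq_0_if_minimum)
    fix h :: real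
    have "RSS x y n (bh + h) th = RSS x y n bh th + h * (- 2 * (\<Sum>j=1..n. res j)) + h\<^sup>2 * real n"
    proof -
      have "RSS x y n (bh + h) th = (\<Sum>j=1..n. (res j)\<^sup>2 + h * (- 2 * res j) + h\<^sup>2)"
        unfolding RSS_def res_def by (intro sum.cong refl) (simp add: power2_eq_square algebra_simps)
      then show ?thesis unfolding RSS_def res_def by (simp add: sum.distrib sum_distrib_left)
    qed
    then show "0 \<le> h * (- 2 * (\<Sum>j=1..n. res j)) + h\<^sup>2 * real n" using min[of "bh + h" th] by simp
  qed
  then show "(\<Sum>j=1..n. y j - bh - th * x j) = 0" by (simp add: res_def)
  have "- 2 * (\<Sum>j=1..n. res j * x j) = 0"
  proof (rule linear_coeff_eq_0_if_minimum)
    fix h :: real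
    have "RSS x y n bh (th + h) = RSS x y n bh th + h * (- 2 * (\<Sum>j=1..n. res j * x j)) + h\<^sup>2 * (\<Sum>j=1..n. (x j)\<^sup>2)"
    proof -
      have "RSS x y n bh (th + h) = (\<Sum>j=1..n. (res j)\<^sup>2 + h * (- 2 * (res j * x j)) + h\<^sup>2 * (x j)\<^sup>2)"
        unfolding RSS_def res_def by (intro sum.cong refl) (simp add: power2_eq_square algebra_simps)
      then show ?thesis unfolding RSS_def res_def by (simp only: sum.distrib sum_distrib_left)
    qed
    then show "0 \<le> h * (- 2 * (\<Sum>j=1..n. res j * x j)) + h\<^sup>2 * (\<Sum>j=1..n. (x j)\<^sup>2)"
      using min[of bh "th + h"] by simp
  qed
  then show "(\<Sum>j=1..n. (y j - bh - th * x j) * x j) = 0" by (simp add: res_def)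
qed

definition slope_weight :: "(nat \<Rightarrow> real) \<Rightarrow> nat \<Rightarrow> nat \<Rightarrow> real" where
  "slope_weight x n j = (x j - xbar x n) / (real n * Stilde2 x n)"

definition intercept_weight :: "(nat \<Rightarrow> real) \<Rightarrow> nat \<Rightarrow> nat \<Rightarrow> real" where
  "intercept_weight x n j = 1 / real n - slope_weight x n j * xbar x n"

lemma sum_slope_weight_eq_0: "(\<Sum>j=1..n. slope_weight x n j) = 0"
  using sum_dev_xbar_eq_0[of x n] unfolding slope_weight_def by (simp flip: sum_divide_distrib)

lemma sum_slope_weight_sq: "(\<Sum>j=1..n. (slope_weight x n j)\<^sup>2) = 1 / (real n * Stilde2 x n)"
  unfolding slope_weight_def
  using real_mult_Stilde2[of n x] by (simp add: power_divide power2_eq_square flip: sum_divide_distrib)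

lemma sum_intercept_weight_sq:
  "(\<Sum>j=1..n. (intercept_weight x n j)\<^sup>2) = 1 / real n + (xbar x n)\<^sup>2 / (real n * Stilde2 x n)"
proof -
  have "(\<Sum>j=1..n. (intercept_weight x n j)\<^sup>2)
      = real n / (real n)\<^sup>2 - 2 * (xbar x n / real n) * (\<Sum>j=1..n. slope_weight x n j)
        + (xbar x n)\<^sup>2 * (\<Sum>j=1..n. (slope_weight x n j)\<^sup>2)"
    unfolding intercept_weight_def
    by (simp add: power2_eq_square algebra_simps sum.distrib sum_subtractf sum_distrib_left
        sum_divide_distrib)
  then show ?thesis
    using sum_slope_weight_eq_0[of x n] sum_slope_weight_sq[of x n] by (simp add: power2_eq_square)
qed

lemma ols_estimation_errors:
  assumes "n \<ge> 1" and nz: "real n * Stilde2 x n \<noteq> 0"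
    and model: "\<And>j. j \<in> {1..n} \<Longrightarrow> y j = \<beta> + s * x j + d j"
    and min: "\<And>b t. RSS x y n bh th \<le> RSS x y n b t"
  shows "th - s = (\<Sum>j=1..n. slope_weight x n j * d j)"
    and "bh - \<beta> = (\<Sum>j=1..n. intercept_weight x n j * d j)"
proof -
  note normal = ols_normal_equations[OF min]
  have "(\<Sum>j=1..n. (y j - bh - th * x j) * (x j - xbar x n)) = 0"
    using normal by (simp add: algebra_simps sum_subtractf flip: sum_distrib_left sum_distrib_right)
  moreover have "(\<Sum>j=1..n. (y j - bh - th * x j) * (x j - xbar x n))
      = (s - th) * (real n * Stilde2 x n) + (\<Sum>j=1..n. (x j - xbar x n) * d j)"
  proof -
    have "(\<Sum>j=1..n. (y j - bh - th * x j) * (x j - xbar x n))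
        = (\<Sum>j=1..n. (\<beta> - bh) * (x j - xbar x n) + (s - th) * ((x j - xbar x n) * x j) + (x j - xbar x n) * d j)"
      using model by (intro sum.cong refl) (simp add: algebra_simps)
    then show ?thesis using sum_dev_xbar_eq_0[of x n] sum_dev_xbar_mult_self[of x n]
      by (simp add: sum.distrib flip: sum_distrib_left)
  qed
  ultimately have slope: "th - s = (\<Sum>j=1..n. (x j - xbar x n) * d j) / (real n * Stilde2 x n)"
    using nz by (simp add: field_simps)
  then show "th - s = (\<Sum>j=1..n. slope_weight x n j * d j)"
    by (simp add: slope_weight_def sum_divide_distrib)
  have "0 = (\<Sum>j=1..n. y j - bh - th * x j)" using normal(1) by simp
  also have "\<dots> = (\<Sum>j=1..n. (\<beta> - bh) + d j - (th - s) * x j)"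
    using model by (intro sum.cong refl) (simp add: algebra_simps)
  also have "\<dots> = real n * (\<beta> - bh) + (\<Sum>j=1..n. d j) - (th - s) * (real n * xbar x n)"
    using sum_eq_real_mult_xbar[of x n] by (simp add: sum.distrib sum_subtractf flip: sum_distrib_left)
  finally have "bh - \<beta> = (\<Sum>j=1..n. d j) / real n - (th - s) * xbar x n"
    using \<open>n \<ge> 1\<close> by (simp add: field_simps)
  then show "bh - \<beta> = (\<Sum>j=1..n. intercept_weight x n j * d j)"
    unfolding \<open>th - s = (\<Sum>j=1..n. slope_weight x n j * d j)\<close> intercept_weight_def
    by (simp add: sum_subtractf sum_divide_distrib sum_distrib_left sum_distrib_right algebra_simps)
qed

lemma powr_bigo_powr_mono:
  "a \<le> b \<Longrightarrow> (\<lambda>n. real n powr a) \<in> O(\<lambda>n. real n powr b)"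
  by (intro landau_o.big_mono eventually_mono[OF eventually_ge_at_top[of 1]]) (simp add: powr_mono)

lemma bigomega_powr_inverse:
  fixes f :: "nat \<Rightarrow> real"
  assumes "f \<in> \<Omega>(\<lambda>n. real n powr p)"
  shows "eventually (\<lambda>n. f n \<noteq> 0) at_top"
    and "(\<lambda>n. 1 / f n) \<in> O(\<lambda>n. real n powr - p)"
proof -
  obtain c where "c > 0" and "eventually (\<lambda>n. norm (f n) \<ge> c * norm (real n powr p)) at_top"
    using assms by (rule landau_omega.bigE)
  then have lower: "eventually (\<lambda>n. \<bar>f n\<bar> \<ge> c * real n powr p \<and> c * real n powr p > 0) at_top"
    by (auto elim!: eventually_mono[OF eventually_conj[OF _ eventually_ge_at_top[of 1]]])
  then show "eventually (\<lambda>n. f n \<noteq> 0) at_top" by eventually_elim auto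
  show "(\<lambda>n. 1 / f n) \<in> O(\<lambda>n. real n powr - p)"
  proof (rule landau_o.bigI[of "1 / c"])
    show "eventually (\<lambda>n. norm (1 / f n) \<le> 1 / c * norm (real n powr - p)) at_top"
      using lower
    proof eventually_elim
      case (elim n)
      then have "1 / \<bar>f n\<bar> \<le> 1 / (c * real n powr p)" by (intro divide_left_mono) auto
      then show ?case using \<open>c > 0\<close> by (simp add: powr_minus field_simps)
    qed
  qed (use \<open>c > 0\<close> in simp)
qed

lemma bigo_of_eventually_le:
  fixes f g :: "nat \<Rightarrow> real"
  assumes "eventually (\<lambda>n. 0 \<le> f n \<and> f n \<le> c * g n) F" and "g \<in> O[F](h)"
  shows "f \<in> O[F](h)"
proof (cases "c = 0")
  case True
  then have "eventually (\<lambda>n. f n = 0) F" using assms(1) by (auto elim: eventually_mono)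
  then show ?thesis by (simp add: landau_o.big.in_cong)
next
  case False
  have "f \<in> O[F](\<lambda>n. c * g n)"
    using assms(1) by (intro landau_o.big_mono) (auto elim!: eventually_mono)
  also have "(\<lambda>n. c * g n) \<in> O[F](h)" using False assms(2) by simp
  finally show ?thesis .
qed

lemma ols_weight_rates:
  fixes x :: "nat \<Rightarrow> real"
  assumes S: "Stilde2 x \<in> \<Omega>(\<lambda>n. real n powr \<gamma>)" and X: "xbar x \<in> O(\<lambda>n. real n powr (\<mu> / 2))"
    and "0 \<le> \<mu>" "a \<le> 1" "a \<le> 1 + \<gamma> - \<mu>"
  shows "eventually (\<lambda>n. real n * Stilde2 x n \<noteq> 0) at_top"
    and "(\<lambda>n. 1 / (real n * Stilde2 x n)) \<in> O(\<lambda>n. real n powr - a)"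
    and "(\<lambda>n. 1 / real n + (xbar x n)\<^sup>2 / (real n * Stilde2 x n)) \<in> O(\<lambda>n. real n powr - a)"
proof -
  have "(\<lambda>n. real n * Stilde2 x n) \<in> \<Omega>(\<lambda>n. real n * real n powr \<gamma>)"
    using S by (rule landau_omega.big.mult_left)
  moreover have "(\<lambda>n. real n * real n powr \<gamma>) = (\<lambda>n. real n powr (1 + \<gamma>))"
    by (simp add: powr_add)
  ultimately have nS: "(\<lambda>n. real n * Stilde2 x n) \<in> \<Omega>(\<lambda>n. real n powr (1 + \<gamma>))" by simp
  show "eventually (\<lambda>n. real n * Stilde2 x n \<noteq> 0) at_top"
    using bigomega_powr_inverse(1)[OF nS] .
  have inv: "(\<lambda>n. 1 / (real n * Stilde2 x n)) \<in> O(\<lambda>n. real n powr - (1 + \<gamma>))"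
    using bigomega_powr_inverse(2)[OF nS] .
  also have "(\<lambda>n. real n powr - (1 + \<gamma>)) \<in> O(\<lambda>n. real n powr - a)"
    using assms by (intro powr_bigo_powr_mono) simp
  finally show "(\<lambda>n. 1 / (real n * Stilde2 x n)) \<in> O(\<lambda>n. real n powr - a)" .
  have "(\<lambda>n. 1 / real n) \<in> O(\<lambda>n. real n powr - a)"
    using powr_bigo_powr_mono[of "- 1" "- a"] assms by (simp add: powr_minus_divide)
  moreover have "(\<lambda>n. (xbar x n)\<^sup>2 / (real n * Stilde2 x n)) \<in> O(\<lambda>n. real n powr - a)"
  proof -
    have "(\<lambda>n. xbar x n * xbar x n * (1 / (real n * Stilde2 x n)))
        \<in> O(\<lambda>n. real n powr (\<mu> / 2) * real n powr (\<mu> / 2) * real n powr - (1 + \<gamma>))"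
      by (intro landau_o.big.mult X inv)
    also have "(\<lambda>n. real n powr (\<mu> / 2) * real n powr (\<mu> / 2) * real n powr - (1 + \<gamma>))
        = (\<lambda>n. real n powr (\<mu> - 1 - \<gamma>))"
      by (simp flip: powr_add) (simp add: algebra_simps)
    also have "(\<lambda>n. real n powr (\<mu> - 1 - \<gamma>)) \<in> O(\<lambda>n. real n powr - a)"
      using assms by (intro powr_bigo_powr_mono) simp
    finally show ?thesis by (simp add: power2_eq_square)
  qed
  ultimately show "(\<lambda>n. 1 / real n + (xbar x n)\<^sup>2 / (real n * Stilde2 x n)) \<in> O(\<lambda>n. real n powr - a)"
    by (rule sum_in_bigo(1))
qed

section \<open>Tail bounds for the least-squares estimates\<close>

locale least_squares_fit = centered_noise M \<delta>
  for M :: "'a measure" and \<delta> :: "nat \<Rightarrow> 'a \<Rightarrow> real" +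
  fixes x :: "nat \<Rightarrow> real" and y :: "nat \<Rightarrow> 'a \<Rightarrow> real" and \<beta> s :: real
    and bhat shat :: "nat \<Rightarrow> 'a \<Rightarrow> real"
  assumes linear_model: "\<And>j \<omega>. j \<ge> 1 \<Longrightarrow> \<omega> \<in> space M \<Longrightarrow> y j \<omega> = \<beta> + s * x j + \<delta> j \<omega>"
    and least_squares: "\<And>n \<omega> b t. \<omega> \<in> space M \<Longrightarrow>
      RSS x (\<lambda>j. y j \<omega>) n (bhat n \<omega>) (shat n \<omega>) \<le> RSS x (\<lambda>j. y j \<omega>) n b t"
begin

lemma estimation_errors:
  assumes "n \<ge> 1" "real n * Stilde2 x n \<noteq> 0" "\<omega> \<in> space M"
  shows "shat n \<omega> - s = (\<Sum>j=1..n. slope_weight x n j * \<delta> j \<omega>)"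
    and "bhat n \<omega> - \<beta> = (\<Sum>j=1..n. intercept_weight x n j * \<delta> j \<omega>)"
  using ols_estimation_errors[OF assms(1,2) _ least_squares[OF assms(3)]] linear_model assms(3)
  by auto

lemma slope_tail_le:
  assumes "n \<ge> 1" "real n * Stilde2 x n \<noteq> 0" "eig_max (cov_mat M \<delta> n) \<le> C" "e > 0"
  shows "prob {\<omega> \<in> space M. e < \<bar>shat n \<omega> - s\<bar>} \<le> C / e\<^sup>2 * (1 / (real n * Stilde2 x n))"
proof -
  have "{\<omega> \<in> space M. e < \<bar>shat n \<omega> - s\<bar>}
      = {\<omega> \<in> space M. e < \<bar>\<Sum>j=1..n. slope_weight x n j * \<delta> j \<omega>\<bar>}"
    using estimation_errors(1)[OF assms(1,2)] by auto
  then show ?thesis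
    using tail_linear_comb_le[OF assms(1,3,4), of "slope_weight x n"] sum_slope_weight_sq[of x n]
    by (simp add: mult_ac)
qed

text \<open>\<open>bhat\<close> is not assumed measurable, so the intercept bound covers every subset of the event.\<close>

lemma intercept_tail_le:
  assumes "n \<ge> 1" "real n * Stilde2 x n \<noteq> 0" "eig_max (cov_mat M \<delta> n) \<le> C" "e > 0"
    and "A \<subseteq> {\<omega> \<in> space M. e < \<bar>bhat n \<omega> - \<beta>\<bar>}"
  shows "prob A \<le> C / e\<^sup>2 * (1 / real n + (xbar x n)\<^sup>2 / (real n * Stilde2 x n))"
proof -
  have [measurable]: "(\<lambda>\<omega>. \<Sum>j=1..n. intercept_weight x n j * \<delta> j \<omega>) \<in> borel_measurable M"
    using noise_measurable by (intro borel_measurable_sum) auto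
  have "{\<omega> \<in> space M. e < \<bar>\<Sum>j=1..n. intercept_weight x n j * \<delta> j \<omega>\<bar>} \<in> events"
    by measurable
  then have "prob A \<le> prob {\<omega> \<in> space M. e < \<bar>\<Sum>j=1..n. intercept_weight x n j * \<delta> j \<omega>\<bar>}"
    using assms(5) estimation_errors(2)[OF assms(1,2)] by (intro finite_measure_mono) auto
  also have "\<dots> \<le> C / e\<^sup>2 * (1 / real n + (xbar x n)\<^sup>2 / (real n * Stilde2 x n))"
    using tail_linear_comb_le[OF assms(1,3,4), of "intercept_weight x n"] sum_intercept_weight_sq[of x n]
    by simp
  finally show ?thesis .
qed

lemma slope_tail_bigo:
  assumes C: "\<And>n. n \<ge> 1 \<Longrightarrow> eig_max (cov_mat M \<delta> n) \<le> C"
    and nz: "eventually (\<lambda>n. real n * Stilde2 x n \<noteq> 0) at_top"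
    and rate: "(\<lambda>n. 1 / (real n * Stilde2 x n)) \<in> O(h)" and "e > 0"
  shows "(\<lambda>n. prob {\<omega> \<in> space M. e < \<bar>shat n \<omega> - s\<bar>}) \<in> O(h)"
proof (rule bigo_of_eventually_le[OF _ rate])
  show "eventually (\<lambda>n. 0 \<le> prob {\<omega> \<in> space M. e < \<bar>shat n \<omega> - s\<bar>}
      \<and> prob {\<omega> \<in> space M. e < \<bar>shat n \<omega> - s\<bar>} \<le> C / e\<^sup>2 * (1 / (real n * Stilde2 x n))) at_top"
    using eventually_conj[OF eventually_ge_at_top[of 1] nz]
    by eventually_elim (intro conjI measure_nonneg slope_tail_le[OF _ _ C \<open>e > 0\<close>]; simp)
qed

lemma intercept_tail_bigo:
  assumes C: "\<And>n. n \<ge> 1 \<Longrightarrow> eig_max (cov_mat M \<delta> n) \<le> C"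
    and nz: "eventually (\<lambda>n. real n * Stilde2 x n \<noteq> 0) at_top"
    and rate: "(\<lambda>n. 1 / real n + (xbar x n)\<^sup>2 / (real n * Stilde2 x n)) \<in> O(h)" and "e > 0"
    and A: "\<And>n. A n \<subseteq> {\<omega> \<in> space M. e < \<bar>bhat n \<omega> - \<beta>\<bar>}"
  shows "(\<lambda>n. prob (A n)) \<in> O(h)"
proof (rule bigo_of_eventually_le[OF _ rate])
  show "eventually (\<lambda>n. 0 \<le> prob (A n)
      \<and> prob (A n) \<le> C / e\<^sup>2 * (1 / real n + (xbar x n)\<^sup>2 / (real n * Stilde2 x n))) at_top"
    using eventually_conj[OF eventually_ge_at_top[of 1] nz]
    by eventually_elim (intro conjI measure_nonneg intercept_tail_le[OF _ _ C \<open>e > 0\<close> A]; simp)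
qed

end

lemma ln_dev_gt_if_exp_dev_gt:
  fixes b m e :: real
  assumes "m > 0" "e > 0" "e < \<bar>exp b - m\<bar>"
  shows "ln (1 + e / m) < \<bar>b - ln m\<bar>"
proof (rule ccontr)
  define L where "L = ln (1 + e / m)"
  assume "\<not> ln (1 + e / m) < \<bar>b - ln m\<bar>"
  then have "ln m - L \<le> b" "b \<le> ln m + L" unfolding L_def by auto
  then have "exp (ln m - L) \<le> exp b" "exp b \<le> exp (ln m + L)" by simp_all
  moreover have "exp L = (m + e) / m" using assms(1,2) by (simp add: L_def add_pos_pos field_simps)
  ultimately have lower: "m * m / (m + e) \<le> exp b" and upper: "exp b \<le> m + e"
    using assms(1,2) by (simp_all add: exp_diff exp_add)
  have "m - e \<le> m * m / (m + e)"
    using assms(1,2) by (simp add: field_simps)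
  then show False using lower upper assms(3) by linarith
qed

theorem mainTheorem7:
  fixes F :: "'b::euclidean_space set"
    and s MF :: real
    and eps :: "nat \<Rightarrow> real"
    and M :: "'a measure"
    and \<delta> y :: "nat \<Rightarrow> 'a \<Rightarrow> real"
    and \<gamma> \<mu> :: real
    and bhat shat :: "nat \<Rightarrow> 'a \<Rightarrow> real"
  defines "x \<equiv> (\<lambda>j. - ln (eps j))"
    and "Q \<equiv> (\<lambda>n. Matrix.mat n n (\<lambda>(i, k).
                 prob_space.expectation M (\<lambda>\<omega>. (\<delta> (Suc i) \<omega> - prob_space.expectation M (\<delta> (Suc i)))
                                          * (\<delta> (Suc k) \<omega> - prob_space.expectation M (\<delta> (Suc k))))))"
    and "\<alpha> \<equiv> 1 - max \<gamma> \<mu> - 2 * max 0 (\<mu> - \<gamma>)"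
  assumes F_bdd: "bounded F" and F_ne: "F \<noteq> {}"
    and F_dim: "minkowski_dim F s"
    and F_cont: "has_minkowski_content F s MF" and MF_pos: "0 < MF"
    and eps_pos: "\<And>j. j \<ge> 1 \<Longrightarrow> 0 < eps j"
    and eps_dec: "\<And>j. j \<ge> 1 \<Longrightarrow> eps (Suc j) < eps j"
    and M: "prob_space M"
    and \<delta>_rv: "\<And>j. j \<ge> 1 \<Longrightarrow> \<delta> j \<in> borel_measurable M"
    and \<delta>_sq: "\<And>j. j \<ge> 1 \<Longrightarrow> integrable M (\<lambda>\<omega>. (\<delta> j \<omega>)\<^sup>2)"
    and \<delta>_mean: "\<And>j. j \<ge> 1 \<Longrightarrow> integrable M (\<delta> j) \<and> prob_space.expectation M (\<delta> j) = 0"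
    and \<delta>_var: "\<And>j. j \<ge> 1 \<Longrightarrow> prob_space.variance M (\<delta> j) > 0"
    and Q_min: "\<exists>c>0. \<forall>n\<ge>1. c \<le> eig_min (Q n)"
    and Q_max: "\<exists>C. \<forall>n\<ge>1. eig_max (Q n) \<le> C"
    and y_def: "\<And>j \<omega>. j \<ge> 1 \<Longrightarrow> \<omega> \<in> space M \<Longrightarrow> y j \<omega> = ln MF + s * x j + \<delta> j \<omega>"
    and S_growth: "Stilde2 x \<in> \<Theta>(\<lambda>n. real n powr \<gamma>)"
    and xbar_growth: "xbar x \<in> O(\<lambda>n. real n powr (\<mu> / 2))"
    and \<gamma>_nonneg: "0 \<le> \<gamma>" and \<mu>_nonneg: "0 \<le> \<mu>"
    and \<alpha>_pos: "0 < \<alpha>"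
    and LS: "\<And>n \<omega> b t. \<omega> \<in> space M \<Longrightarrow>
               RSS x (\<lambda>j. y j \<omega>) n (bhat n \<omega>) (shat n \<omega>) \<le> RSS x (\<lambda>j. y j \<omega>) n b t"
  shows "\<forall>e>0.
           (\<lambda>n. measure M {\<omega> \<in> space M. \<bar>shat n \<omega> - s\<bar> > e}) \<in> O(\<lambda>n. real n powr (- \<alpha>)) \<and>
           (\<lambda>n. measure M {\<omega> \<in> space M. \<bar>exp (bhat n \<omega>) - MF\<bar> > e}) \<in> O(\<lambda>n. real n powr (- \<alpha>))"
proof -
  have "centered_noise M \<delta>"
    using M \<delta>_rv \<delta>_sq \<delta>_mean by (simp add: centered_noise_def centered_noise_axioms_def)
  then interpret least_squares_fit M \<delta> x y "ln MF" s bhat shat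
    using y_def LS by (simp add: least_squares_fit_def least_squares_fit_axioms_def)
  obtain C where C: "\<And>n. n \<ge> 1 \<Longrightarrow> eig_max (cov_mat M \<delta> n) \<le> C"
    using Q_max by (auto simp: Q_def cov_mat_def)
  have "\<alpha> \<le> 1" "\<alpha> \<le> 1 + \<gamma> - \<mu>"
    unfolding \<alpha>_def using \<gamma>_nonneg \<mu>_nonneg by (auto simp: max_def)
  note rates = ols_weight_rates[OF bigthetaD2[OF S_growth] xbar_growth \<mu>_nonneg this]
  show ?thesis
  proof (intro allI impI conjI)
    fix e :: real assume "e > 0"
    show "(\<lambda>n. measure M {\<omega> \<in> space M. \<bar>shat n \<omega> - s\<bar> > e}) \<in> O(\<lambda>n. real n powr (- \<alpha>))"
      using slope_tail_bigo[OF C rates(1,2) \<open>e > 0\<close>] .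
    have "ln (1 + e / MF) > 0" using divide_pos_pos[OF \<open>e > 0\<close> MF_pos] by (intro ln_gt_zero) simp
    then show "(\<lambda>n. measure M {\<omega> \<in> space M. \<bar>exp (bhat n \<omega>) - MF\<bar> > e}) \<in> O(\<lambda>n. real n powr (- \<alpha>))"
      using ln_dev_gt_if_exp_dev_gt[OF MF_pos \<open>e > 0\<close>]
      by (intro intercept_tail_bigo[OF C rates(1,3)]) auto
  qed
qed

end
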